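(* Let $p$ be the POP of length 4 defined by the single relation $1>4$ (labels $2,3$ isolated); equivalently, avoiding $p$ means avoiding all 12 patterns of length 4 whose first entry exceeds the last. Let $a(n)=|S_n(p)|$. Then $a(0)=a(1)=1$, $a(2)=2$, $a(3)=6$, and for $n\geq 4$, $$a(n)=a(n-1)+a(n-2)+3a(n-3)+a(n-4).$$ Moreover, $$\sum_{n\geq 0}a(n)x^n=\frac{1}{1-x-x^2-3x^3-x^4}.$$
   Context: An $n$-permutation is a word $\pi=\pi_1\cdots\pi_n$ containing each of $1,\ldots,n$ exactly once; $S_n$ is the set of $n$-permutations ($S_0$ consists of the empty permutation). A partially ordered pattern (POP) $p$ of length $k$ is a partial order on the label set $\{1,\ldots,k\}$; it is described by a set of generating relations, where a relation $x>y$ means that in an occurrence the entry in the $x$-th chosen position must be larger than the entry in the $y$-th chosen position, and labels not involved in any relation are unconstrained. An $n$-permutation $\pi$ contains $p$ if there are indices $1\leq i_1<\cdots<i_k\leq n$ such that $\pi_{i_x}>\pi_{i_y}$ whenever $x>y$ in the partial order; otherwise $\pi$ avoids $p$. $S_n(p)$ denotes the set of $n$-permutations avoiding $p$. *)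

theory Defs
  imports Main "HOL-Computational_Algebra.Formal_Power_Series"
begin

definition perms :: "nat \<Rightarrow> nat list set" where
  "perms n = {w. length w = n \<and> distinct w \<and> set w = {1..n}}"

text \<open>A POP of length k is given by its generating relations: a pair (x,y)
  stands for the relation x > y between labels in {1..k}.\<close>
definition contains_pop :: "nat list \<Rightarrow> nat \<Rightarrow> (nat \<times> nat) set \<Rightarrow> bool" where
  "contains_pop w k R \<longleftrightarrow>
     (\<exists>i :: nat \<Rightarrow> nat. (\<forall>x\<in>{1..k}. \<forall>y\<in>{1..k}. x < y \<longrightarrow> i x < i y)
        \<and> (\<forall>x\<in>{1..k}. i x < length w)
        \<and> (\<forall>(x, y)\<in>R. w ! i x > w ! i y))"

definition avoiders :: "nat \<Rightarrow> nat \<Rightarrow> (nat \<times> nat) set \<Rightarrow> nat list set" where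
  "avoiders n k R = {w \<in> perms n. \<not> contains_pop w k R}"

end

theory Submission
  imports Defs
begin

text \<open>
  Call a word \<open>d\<close>-gap increasing if each entry is smaller than every entry at least \<open>d\<close>
  positions to its right; a permutation avoids the POP \<open>1 > 4\<close> iff it is 3-gap increasing.
  All values below the entry at position \<open>p\<close> of such a permutation lie before position
  \<open>p + 3\<close>, so the first entry is at most 3, and a short case analysis shows that a nonempty
  3-gap increasing permutation starts with one of the six blocks 1, 21, 231, 312, 321, 2413,
  each of which is itself a permutation. Hence it is uniquely a direct sum \<open>b \<oplus> v\<close> of
  such a block \<open>b\<close> with a shorter 3-gap increasing permutation \<open>v\<close>; counting by the block
  lengths 1, 2, 3, 3, 3, 4 gives the recurrence, and the recurrence gives the generating function.
\<close>

definition gap_increasing :: "nat \<Rightarrow> nat list \<Rightarrow> bool" where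
  "gap_increasing d w \<longleftrightarrow> (\<forall>i j. i + d \<le> j \<longrightarrow> j < length w \<longrightarrow> w ! i < w ! j)"

lemma strict_mono_labels_spread:
  assumes mono: "\<forall>x\<in>{1..k}. \<forall>y\<in>{1..k}. x < y \<longrightarrow> i x < i (y::nat)"
    and "x \<in> {1..k}"
  shows "i 1 + (x - 1) \<le> i x"
  using assms(2)
proof (induction x)
  case (Suc x)
  show ?case
  proof (cases "x = 0")
    case False
    with Suc.prems have "i 1 + (x - 1) \<le> i x" "i x < i (Suc x)"
      using Suc.IH mono by auto
    then show ?thesis by simp
  qed simp
qed simp

lemma contains_first_gt_last_iff:
  assumes "distinct w" "k \<ge> 2"
  shows "contains_pop w k {(1, k)} \<longleftrightarrow> \<not> gap_increasing (k - 1) w"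
proof
  assume "contains_pop w k {(1, k)}"
  then obtain i where mono: "\<forall>x\<in>{1..k}. \<forall>y\<in>{1..k}. x < y \<longrightarrow> i x < i y"
    and "i k < length w" "w ! i 1 > w ! i k"
    unfolding contains_pop_def using \<open>k \<ge> 2\<close> by auto
  moreover have "i 1 + (k - 1) \<le> i k"
    using strict_mono_labels_spread[OF mono] \<open>k \<ge> 2\<close> by simp
  ultimately show "\<not> gap_increasing (k - 1) w"
    unfolding gap_increasing_def by force
next
  assume "\<not> gap_increasing (k - 1) w"
  then obtain p q where pq: "p + (k - 1) \<le> q" "q < length w" "\<not> w ! p < w ! q"
    unfolding gap_increasing_def by auto
  moreover have "w ! p \<noteq> w ! q"
    using pq \<open>distinct w\<close> \<open>k \<ge> 2\<close> by (simp add: nth_eq_iff_index_eq)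
  ultimately have "w ! p > w ! q" by simp
  define i where "i x = (if x < k then p + (x - 1) else q)" for x
  show "contains_pop w k {(1, k)}"
    unfolding contains_pop_def
    by (rule exI[of _ i]) (use pq \<open>w ! p > w ! q\<close> \<open>k \<ge> 2\<close> in \<open>auto simp: i_def\<close>)
qed

definition gap_perms :: "nat \<Rightarrow> nat \<Rightarrow> nat list set" where
  "gap_perms d n = {w \<in> perms n. gap_increasing d w}"

lemma avoiders_first_gt_last:
  assumes "k \<ge> 2"
  shows "avoiders n k {(1, k)} = gap_perms (k - 1) n"
  using contains_first_gt_last_iff[OF _ assms]
  by (auto simp: avoiders_def gap_perms_def perms_def)

lemma finite_gap_perms: "finite (gap_perms d n)"
proof (rule finite_subset)
  show "gap_perms d n \<subseteq> {w. set w \<subseteq> {1..n} \<and> length w = n}"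
    by (auto simp: gap_perms_def perms_def)
qed (simp add: finite_lists_length_eq)

lemma gap_perms_0: "gap_perms d 0 = {[]}"
  by (auto simp: gap_perms_def perms_def gap_increasing_def)

lemma gap_increasing_map_iff:
  assumes "strict_mono f"
  shows "gap_increasing d (map f w) \<longleftrightarrow> gap_increasing d w"
  using strict_mono_less[OF assms] by (simp add: gap_increasing_def)

lemma gap_increasing_append_iff:
  assumes "\<forall>x\<in>set xs. \<forall>y\<in>set ys. x < y"
  shows "gap_increasing d (xs @ ys) \<longleftrightarrow> gap_increasing d xs \<and> gap_increasing d ys"
proof
  assume inc: "gap_increasing d (xs @ ys)"
  show "gap_increasing d xs \<and> gap_increasing d ys"
    unfolding gap_increasing_def
  proof (intro conjI allI impI)
    fix i j assume "i + d \<le> j" "j < length xs"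
    then show "xs ! i < xs ! j"
      using inc[unfolded gap_increasing_def, rule_format, of i j] by (simp add: nth_append)
  next
    fix i j assume "i + d \<le> j" "j < length ys"
    then show "ys ! i < ys ! j"
      using inc[unfolded gap_increasing_def, rule_format, of "length xs + i" "length xs + j"]
      by simp
  qed
next
  assume "gap_increasing d xs \<and> gap_increasing d ys"
  then show "gap_increasing d (xs @ ys)"
    using assms unfolding gap_increasing_def
    by (auto simp: nth_append)
qed

definition direct_sum :: "nat list \<Rightarrow> nat list \<Rightarrow> nat list" where
  "direct_sum b v = b @ map (\<lambda>x. x + length b) v"

lemma shift_atLeastAtMost: "(\<lambda>x. x + m) ` {1..k} = {m + 1..m + k :: nat}"
  by (auto simp: image_iff intro!: bexI[of _ "_ - m"])

lemma direct_sum_perms: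
  assumes "b \<in> perms m" "v \<in> perms k"
  shows "direct_sum b v \<in> perms (m + k)"
  using assms shift_atLeastAtMost[of m k]
  by (auto simp: perms_def direct_sum_def distinct_map inj_on_def)

lemma gap_increasing_direct_sum_iff:
  assumes "b \<in> perms m" "v \<in> perms k"
  shows "gap_increasing d (direct_sum b v) \<longleftrightarrow> gap_increasing d b \<and> gap_increasing d v"
proof -
  have "\<forall>x\<in>set b. \<forall>y\<in>set (map (\<lambda>x. x + length b) v). x < y"
    using assms by (force simp: perms_def)
  then show ?thesis
    unfolding direct_sum_def
    by (simp add: gap_increasing_append_iff gap_increasing_map_iff strict_mono_def)
qed

lemma perms_prefix_direct_sum:
  assumes "w \<in> perms n" "take m w \<in> perms m"
  shows "\<exists>v\<in>perms (n - m). w = direct_sum (take m w) v"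
proof -
  let ?d = "drop m w"
  have "m \<le> n" using assms by (auto simp: perms_def)
  have dist: "distinct ?d" and disj: "set (take m w) \<inter> set ?d = {}"
    using assms(1) distinct_append[of "take m w" ?d] by (simp_all add: perms_def)
  have "set ?d = {1..n} - set (take m w)"
    using assms(1) disj set_append[of "take m w" ?d] by (auto simp: perms_def)
  then have set_d: "set ?d = {m + 1..n}"
    using assms(2) by (auto simp: perms_def)
  define v where "v = map (\<lambda>x. x - m) ?d"
  have "?d = map (\<lambda>x. x + m) v"
    unfolding v_def map_map by (rule sym, rule map_idI) (use set_d in auto)
  moreover have "length (take m w) = m"
    using assms(2) by (simp add: perms_def)
  ultimately have "w = direct_sum (take m w) v"
    unfolding direct_sum_def by (metis append_take_drop_id)
  moreover have "v \<in> perms (n - m)"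
  proof -
    have "set v = (\<lambda>x. x - m) ` {m + 1..n}"
      using set_d by (simp add: v_def)
    also have "\<dots> = {1..n - m}"
      by (auto simp: image_iff intro!: bexI[of _ "_ + m"])
    finally have "set v = {1..n - m}" .
    moreover have "distinct v"
      using dist set_d by (auto simp: v_def distinct_map inj_on_def)
    ultimately show ?thesis
      using \<open>m \<le> n\<close> assms(1) by (simp add: perms_def v_def)
  qed
  ultimately show ?thesis by blast
qed

lemma direct_sum_inj: "inj (direct_sum b)"
  by (auto simp: inj_def direct_sum_def)

lemma perms_nth_bounds:
  assumes "w \<in> perms n" "p < n"
  shows "1 \<le> w ! p" "w ! p \<le> n"
  using assms nth_mem[of p w] by (auto simp: perms_def)

lemma perms_nth_eq_iff:
  assumes "w \<in> perms n" "p < n" "q < n"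
  shows "w ! p = w ! q \<longleftrightarrow> p = q"
  using assms by (simp add: perms_def nth_eq_iff_index_eq)

lemma gap_increasing_perm_smaller_nearby:
  assumes "w \<in> perms n" "gap_increasing d w" "p < n" "1 \<le> y" "y < w ! p"
  shows "\<exists>q < p + d. q < n \<and> w ! q = y"
proof -
  have "w ! p \<le> n"
    using perms_nth_bounds[OF assms(1,3)] by simp
  then obtain q where "q < n" "w ! q = y"
    using assms(1,4,5) in_set_conv_nth[of y w] by (auto simp: perms_def)
  moreover have "q < p + d"
  proof (rule ccontr)
    assume "\<not> q < p + d"
    then have "w ! p < w ! q"
      using assms(1,2) \<open>q < n\<close> unfolding gap_increasing_def perms_def by auto
    with \<open>w ! q = y\<close> \<open>y < w ! p\<close> show False by simp
  qed
  ultimately show ?thesis by blast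
qed

lemma gap_increasing_perm_nth_le:
  assumes "w \<in> perms n" "gap_increasing d w" "p < n"
  shows "w ! p \<le> p + d"
proof -
  have "d \<noteq> 0"
    using assms unfolding gap_increasing_def perms_def by force
  have "{1..<w ! p} \<subseteq> (!) w ` ({..<p + d} - {p})"
  proof
    fix y assume "y \<in> {1..<w ! p}"
    then obtain q where "q < p + d" "w ! q = y"
      using gap_increasing_perm_smaller_nearby[OF assms] by auto
    then show "y \<in> (!) w ` ({..<p + d} - {p})"
      using \<open>y \<in> {1..<w ! p}\<close> by force
  qed
  then have "card {1..<w ! p} \<le> card ((!) w ` ({..<p + d} - {p}))"
    by (intro card_mono) auto
  also have "\<dots> \<le> card ({..<p + d} - {p})"
    by (intro card_image_le) auto
  also have "\<dots> = p + d - 1"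
    using \<open>d \<noteq> 0\<close> by simp
  finally have "w ! p - 1 \<le> p + d - 1"
    by simp
  with \<open>d \<noteq> 0\<close> show ?thesis
    by linarith
qed

lemma take_eq_map_nth: "k \<le> length w \<Longrightarrow> take k w = map ((!) w) [0..<k]"
  by (simp add: list_eq_iff_nth_eq)

lemma gap3_perm_first_2:
  assumes perm: "w \<in> perms n" and inc: "gap_increasing 3 w" and "n \<ge> 1" and "w ! 0 = 2"
  shows "take 2 w = [2, 1] \<or> take 3 w = [2, 3, 1] \<or> take 4 w = [2, 4, 1, 3]"
proof -
  have len: "length w = n" using perm by (simp add: perms_def)
  obtain q where q: "q < 3" "q < n" "w ! q = 1"
    using gap_increasing_perm_smaller_nearby[OF perm inc, of 0 1] \<open>n \<ge> 1\<close> \<open>w ! 0 = 2\<close>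
    by auto
  moreover have "q \<noteq> 0"
    using q \<open>w ! 0 = 2\<close> by (intro notI; simp)
  ultimately consider "q = 1" | "q = 2" by linarith
  then show ?thesis
  proof cases
    case 1
    then show ?thesis
      using take_eq_map_nth[of 2 w] len q \<open>w ! 0 = 2\<close> by (simp add: upt_rec numeral_eq_Suc)
  next
    case 2
    have "w ! 1 \<noteq> 1" "w ! 1 \<noteq> 2" "1 \<le> w ! 1" "w ! 1 \<le> 4"
      using perms_nth_eq_iff[OF perm, of 1 0] perms_nth_eq_iff[OF perm, of 1 2] q \<open>q = 2\<close>
        \<open>w ! 0 = 2\<close> perms_nth_bounds[OF perm, of 1] gap_increasing_perm_nth_le[OF perm inc, of 1]
      by auto
    then consider "w ! 1 = 3" | "w ! 1 = 4" by linarith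
    then show ?thesis
    proof cases
      case 1
      then show ?thesis
        using take_eq_map_nth[of 3 w] len q \<open>q = 2\<close> \<open>w ! 0 = 2\<close>
        by (simp add: upt_rec numeral_eq_Suc)
    next
      case 2
      then obtain r where r: "r < 4" "r < n" "w ! r = 3"
        using gap_increasing_perm_smaller_nearby[OF perm inc, of 1 3] q \<open>q = 2\<close> by auto
      with \<open>w ! 0 = 2\<close> \<open>w ! 1 = 4\<close> q \<open>q = 2\<close> have "r = 3"
        by (cases "r = 0 \<or> r = 1 \<or> r = 2") auto
      then show ?thesis
        using take_eq_map_nth[of 4 w] len q r \<open>q = 2\<close> \<open>w ! 0 = 2\<close> \<open>w ! 1 = 4\<close>
        by (simp add: upt_rec numeral_eq_Suc)
    qed
  qed
qed

lemma gap3_perm_first_3: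
  assumes perm: "w \<in> perms n" and inc: "gap_increasing 3 w" and "n \<ge> 1" and "w ! 0 = 3"
  shows "take 3 w = [3, 1, 2] \<or> take 3 w = [3, 2, 1]"
proof -
  have len: "length w = n" using perm by (simp add: perms_def)
  obtain q1 where q1: "q1 < 3" "q1 < n" "w ! q1 = 1"
    using gap_increasing_perm_smaller_nearby[OF perm inc, of 0 1] \<open>n \<ge> 1\<close> \<open>w ! 0 = 3\<close>
    by auto
  obtain q2 where q2: "q2 < 3" "q2 < n" "w ! q2 = 2"
    using gap_increasing_perm_smaller_nearby[OF perm inc, of 0 2] \<open>n \<ge> 1\<close> \<open>w ! 0 = 3\<close>
    by auto
  have "q1 \<noteq> 0" "q2 \<noteq> 0" "q1 \<noteq> q2"
    using q1 q2 \<open>w ! 0 = 3\<close> by (intro notI; simp)+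
  with q1 q2 consider "q1 = 1" "q2 = 2" | "q1 = 2" "q2 = 1"
    by linarith
  then show ?thesis
    by cases
      (use take_eq_map_nth[of 3 w] len q1 q2 \<open>w ! 0 = 3\<close> in \<open>simp_all add: upt_rec numeral_eq_Suc\<close>)
qed

text \<open>The gap-3-increasing permutations none of whose proper nonempty prefixes is a permutation.\<close>
definition gap3_blocks :: "nat list list" where
  "gap3_blocks = [[1], [2, 1], [2, 3, 1], [3, 1, 2], [3, 2, 1], [2, 4, 1, 3]]"

lemma gap3_perm_starts_with_block:
  assumes perm: "w \<in> perms n" and inc: "gap_increasing 3 w" and "n \<ge> 1"
  shows "\<exists>b\<in>set gap3_blocks. take (length b) w = b"
proof -
  have prefix: "take k w = b \<Longrightarrow> b \<in> set gap3_blocks \<Longrightarrow> ?thesis" for k b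
    by (intro bexI[of _ b]) (auto simp: min_def)
  have "1 \<le> w ! 0" "w ! 0 \<le> 3"
    using perms_nth_bounds[OF perm] gap_increasing_perm_nth_le[OF perm inc] \<open>n \<ge> 1\<close> by fastforce+
  then consider "w ! 0 = 1" | "w ! 0 = 2" | "w ! 0 = 3" by linarith
  then show ?thesis
  proof cases
    case 1
    then have "take 1 w = [1]"
      using take_eq_map_nth[of 1 w] perm \<open>n \<ge> 1\<close> by (simp add: perms_def)
    then show ?thesis
      using prefix by (simp add: gap3_blocks_def)
  next
    case 2
    then show ?thesis
      using gap3_perm_first_2[OF perm inc \<open>n \<ge> 1\<close>] prefix by (auto simp: gap3_blocks_def)
  next
    case 3
    then show ?thesis
      using gap3_perm_first_3[OF perm inc \<open>n \<ge> 1\<close>] prefix by (auto simp: gap3_blocks_def)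
  qed
qed

lemma gap3_blocks_gap_perms:
  assumes "b \<in> set gap3_blocks"
  shows "b \<in> gap_perms 3 (length b)"
proof -
  have short: "gap_increasing 3 w" if "length w \<le> 3" for w
    using that by (auto simp: gap_increasing_def)
  have "gap_increasing 3 [2, 4, 1, 3]"
    unfolding gap_increasing_def
  proof (intro allI impI)
    fix i j :: nat
    assume "i + 3 \<le> j" "j < length [2, 4, 1, 3 :: nat]"
    then have "i = 0" "j = 3" by auto
    then show "[2, 4, 1, 3] ! i < [2, 4, 1, 3 :: nat] ! j" by simp
  qed
  with assms show ?thesis
    by (auto simp: gap3_blocks_def gap_perms_def perms_def short)
qed

lemma gap3_perms_decomposition:
  assumes "n \<ge> 1"
  shows "gap_perms 3 n =
    (\<Union>b\<in>{b \<in> set gap3_blocks. length b \<le> n}. direct_sum b ` gap_perms 3 (n - length b))"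
    (is "_ = ?U")
proof
  show "gap_perms 3 n \<subseteq> ?U"
  proof
    fix w assume "w \<in> gap_perms 3 n"
    then have w: "w \<in> perms n" "gap_increasing 3 w"
      by (simp_all add: gap_perms_def)
    then obtain b where b: "b \<in> set gap3_blocks" "take (length b) w = b"
      using gap3_perm_starts_with_block assms by blast
    then have b_perm: "b \<in> perms (length b)" "gap_increasing 3 b"
      using gap3_blocks_gap_perms by (simp_all add: gap_perms_def)
    have "length b \<le> n"
      using arg_cong[OF b(2), of length] w(1) by (auto simp: perms_def)
    obtain v where v: "v \<in> perms (n - length b)" "w = direct_sum b v"
      using perms_prefix_direct_sum[of w n "length b"] w(1) b(2) b_perm(1) by auto
    then have "gap_increasing 3 v"
      using w(2) gap_increasing_direct_sum_iff[OF b_perm(1) v(1)] by simp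
    with v b(1) \<open>length b \<le> n\<close> show "w \<in> ?U"
      by (auto simp: gap_perms_def)
  qed
next
  show "?U \<subseteq> gap_perms 3 n"
  proof clarify
    fix b v
    assume b: "b \<in> set gap3_blocks" "length b \<le> n" and v: "v \<in> gap_perms 3 (n - length b)"
    have b_perm: "b \<in> perms (length b)" "gap_increasing 3 b"
      using gap3_blocks_gap_perms[OF b(1)] by (simp_all add: gap_perms_def)
    have v_perm: "v \<in> perms (n - length b)" "gap_increasing 3 v"
      using v by (simp_all add: gap_perms_def)
    then show "direct_sum b v \<in> gap_perms 3 n"
      using b(2) b_perm direct_sum_perms[OF b_perm(1) v_perm(1)]
        gap_increasing_direct_sum_iff[OF b_perm(1) v_perm(1)]
      by (simp add: gap_perms_def)
  qed
qed

lemma card_gap3_perms: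
  assumes "n \<ge> 1"
  shows "card (gap_perms 3 n) =
    (\<Sum>b\<leftarrow>gap3_blocks. if length b \<le> n then card (gap_perms 3 (n - length b)) else 0)"
proof -
  have "card (gap_perms 3 n) =
      (\<Sum>b\<in>{b \<in> set gap3_blocks. length b \<le> n}. card (direct_sum b ` gap_perms 3 (n - length b)))"
    unfolding gap3_perms_decomposition[OF assms]
  proof (rule card_UN_disjoint)
    show "\<forall>b\<in>{b \<in> set gap3_blocks. length b \<le> n}. \<forall>b'\<in>{b \<in> set gap3_blocks. length b \<le> n}.
      b \<noteq> b' \<longrightarrow>
      direct_sum b ` gap_perms 3 (n - length b) \<inter> direct_sum b' ` gap_perms 3 (n - length b') = {}"
      \<comment> \<open>no block is a prefix of another\<close>
      by (auto simp: direct_sum_def gap3_blocks_def)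
  qed (auto simp: finite_gap_perms)
  also have "\<dots> = (\<Sum>b\<in>{b \<in> set gap3_blocks. length b \<le> n}. card (gap_perms 3 (n - length b)))"
    by (intro sum.cong refl card_image inj_on_subset[OF direct_sum_inj]) auto
  also have "\<dots> = (\<Sum>b\<in>set gap3_blocks. if length b \<le> n then card (gap_perms 3 (n - length b)) else 0)"
    by (simp add: sum.inter_filter)
  also have "\<dots> = (\<Sum>b\<leftarrow>gap3_blocks. if length b \<le> n then card (gap_perms 3 (n - length b)) else 0)"
    by (rule sum_list_distinct_conv_sum_set[symmetric]) (simp add: gap3_blocks_def)
  finally show ?thesis .
qed

lemma fps_inverse_of_recurrence:
  fixes a :: "nat \<Rightarrow> nat"
  assumes "a 0 = 1" "a 1 = 1" "a 2 = 2" "a 3 = 6"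
    and rec: "\<And>n. n \<ge> 4 \<Longrightarrow> a n = a (n - 1) + a (n - 2) + 3 * a (n - 3) + a (n - 4)"
  shows "Abs_fps (\<lambda>n. of_nat (a n) :: 'a :: field)
    = inverse (1 - fps_X - fps_X ^ 2 - 3 * fps_X ^ 3 - fps_X ^ 4)"
proof -
  define A where "A = Abs_fps (\<lambda>n. of_nat (a n) :: 'a)"
  have "(1 - fps_X - fps_X ^ 2 - 3 * fps_X ^ 3 - fps_X ^ 4) * A
      = A - fps_X ^ 1 * A - fps_X ^ 2 * A - 3 * (fps_X ^ 3 * A) - fps_X ^ 4 * A"
    by (simp add: algebra_simps)
  also have "\<dots> = 1"
  proof (rule fps_ext)
    fix n :: nat
    consider "n = 0" | "n = 1" | "n = 2" | "n = 3" | "n \<ge> 4" by linarith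
    then show "fps_nth (A - fps_X ^ 1 * A - fps_X ^ 2 * A - 3 * (fps_X ^ 3 * A) - fps_X ^ 4 * A) n
      = fps_nth 1 n"
    proof cases
      case 5
      then show ?thesis
        using rec[OF 5] by (simp add: fps_X_power_mult_nth A_def numeral_fps_const del: power_one_right)
    qed (use assms in \<open>simp_all add: fps_X_power_mult_nth A_def numeral_fps_const del: power_one_right\<close>)
  qed
  finally show ?thesis
    unfolding A_def by (rule fps_inverse_unique[symmetric])
qed

theorem theorem3p4:
  fixes a :: "nat \<Rightarrow> nat"
  defines "a \<equiv> \<lambda>n. card (avoiders n 4 {(1, 4)})"
  shows "a 0 = 1 \<and> a 1 = 1 \<and> a 2 = 2 \<and> a 3 = 6
    \<and> (\<forall>n\<ge>4. a n = a (n - 1) + a (n - 2) + 3 * a (n - 3) + a (n - 4))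
    \<and> Abs_fps (\<lambda>n. of_nat (a n) :: rat)
        = inverse (1 - fps_X - fps_X ^ 2 - 3 * fps_X ^ 3 - fps_X ^ 4)"
proof -
  have a_eq: "a n = card (gap_perms 3 n)" for n
    unfolding a_def using avoiders_first_gt_last[of 4] by simp
  have block_sum: "a n = (\<Sum>b\<leftarrow>gap3_blocks. if length b \<le> n then a (n - length b) else 0)"
    if "n \<ge> 1" for n
    unfolding a_eq using card_gap3_perms[OF that] .
  have "a 0 = 1"
    by (simp add: a_eq gap_perms_0)
  moreover have "a 1 = 1" "a 2 = 2" "a 3 = 6"
    using block_sum[of 1] block_sum[of 2] block_sum[of 3] \<open>a 0 = 1\<close>
    by (simp_all add: gap3_blocks_def)
  moreover have "a n = a (n - 1) + a (n - 2) + 3 * a (n - 3) + a (n - 4)" if "n \<ge> 4" for n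
    using block_sum[of n] that by (simp add: gap3_blocks_def numeral_eq_Suc)
  ultimately show ?thesis
    using fps_inverse_of_recurrence[of a] by blast
qed

end
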